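(* Let $n$ be a nonnegative integer and let $x,y$ be complex numbers such that no denominator below vanishes. Then \[ \sum_{k=0}^{2n}(-1)^k\binom{2n}{k}\frac{\binom{x+k}{k}\binom{y+k}{k}}{\binom{x+2n}{k}\binom{y+2n}{k}}H_{k}(x) =\frac{1}{2}\frac{\binom{x+n}{n}\binom{y+n}{n}\binom{1+x+y+2n}{2n}}{\binom{x+2n}{2n}\binom{y+2n}{2n}\binom{1+x+y+n}{n}} \big\{H_n(x)-H_n(1+x+y)+H_{2n}(1+x+y)\big\}. \]
   Context: For complex $z$ and a nonnegative integer $k$, $\binom{z}{k}=\frac{z(z-1)\cdots(z-k+1)}{k!}$ (with $\binom{z}{0}=1$). For complex $x$ and nonnegative integer $m$, the generalized harmonic number is $H_0(x)=0$ and $H_m(x)=\sum_{j=1}^m\frac{1}{x+j}$ for $m\ge 1$. The parameters are assumed to be such that all denominators (including those in the harmonic numbers) are nonzero. *)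

theory Defs
  imports "HOL-Analysis.Analysis"
begin

definition genH :: "nat \<Rightarrow> complex \<Rightarrow> complex" where
  "genH m x = (\<Sum>j=1..m. 1 / (x + of_nat j))"

end

theory Submission
  imports Defs
begin

text \<open>
  Write \<open>S(n,x,y)\<close> for the alternating sum of the theorem without the harmonic numbers.
  It is Dixon's well-poised \<open>\<^sub>3F\<^sub>2\<close> sum, with closed form
  \<open>(2n)!/n! \<cdot> (x+y+n+2)\<^sub>n / ((x+n+1)\<^sub>n (y+n+1)\<^sub>n)\<close>; we prove this by the WZ method:
  both sides satisfy \<open>F(n+1,x,y) = \<rho>(n,x,y) F(n,x+1,y+1)\<close> with the same rational \<open>\<rho>\<close>.

  The identity holds on an open set of \<open>x\<close>, so it may be differentiated in \<open>x\<close>.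
  The logarithmic derivative of the \<open>k\<close>-th term is \<open>H\<^sub>k(x) - H\<^sub>2\<^sub>n(x) + H\<^sub>2\<^sub>n\<^sub>-\<^sub>k(x)\<close>,
  and the terms are invariant under \<open>k \<mapsto> 2n - k\<close>, so the derivative of the sum is
  \<open>2T - H\<^sub>2\<^sub>n(x) S\<close>, where \<open>T\<close> is the sum of the theorem. Comparing with the
  logarithmic derivative of the closed form determines \<open>T\<close>.
\<close>

section \<open>Harmonic numbers and logarithmic derivatives\<close>

lemma genH_conv_sum_lessThan: "genH m x = (\<Sum>i<m. 1 / (x + of_nat (Suc i)))"
  unfolding genH_def using sum.atLeast1_atMost_eq[of "\<lambda>j. 1 / (x + of_nat j)" m] by simp

lemma genH_Suc: "genH (Suc m) x = genH m x + 1 / (x + of_nat (Suc m))"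
  unfolding genH_conv_sum_lessThan by simp

lemma genH_add: "genH (m + p) x = genH m x + (\<Sum>i<p. 1 / (x + of_nat (m + Suc i)))"
  by (induction p) (simp_all add: genH_Suc)

lemma genH_diff_conv_sum:
  assumes "k \<le> m"
  shows "genH m x - genH (m - k) x = (\<Sum>i<k. 1 / (x + (of_nat m - of_nat i)))"
  using assms
proof (induction k)
  case (Suc k)
  have "m - k = Suc (m - Suc k)" and "of_nat (Suc (m - Suc k)) = (of_nat m - of_nat k :: complex)"
    using Suc.prems by (simp_all add: of_nat_diff)
  then show ?case
    using Suc by (simp add: genH_Suc algebra_simps)
qed simp

lemma has_field_derivative_linear_fraction:
  fixes a b w :: complex
  assumes "w + a \<noteq> 0" and "w + b \<noteq> 0"
  shows "((\<lambda>z. (z + a) / (z + b)) has_field_derivative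
           (w + a) / (w + b) * (1 / (w + a) - 1 / (w + b))) (at w)"
  using assms by (auto intro!: derivative_eq_intros simp: divide_simps)

lemma has_field_derivative_prod_linear_fractions:
  fixes a b :: "'i \<Rightarrow> complex"
  assumes "\<And>i. i \<in> I \<Longrightarrow> w + a i \<noteq> 0" and "\<And>i. i \<in> I \<Longrightarrow> w + b i \<noteq> 0"
  shows "((\<lambda>z. \<Prod>i\<in>I. (z + a i) / (z + b i)) has_field_derivative
           (\<Prod>i\<in>I. (w + a i) / (w + b i)) * (\<Sum>i\<in>I. 1 / (w + a i) - 1 / (w + b i))) (at w)"
proof -
  define f' where "f' i = (w + a i) / (w + b i) * (1 / (w + a i) - 1 / (w + b i))" for i
  have "((\<lambda>z. \<Prod>i\<in>I. (z + a i) / (z + b i)) has_field_derivative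
          (\<Prod>i\<in>I. (w + a i) / (w + b i)) * (\<Sum>i\<in>I. f' i / ((w + a i) / (w + b i)))) (at w)"
  proof (rule has_field_derivative_prod')
    fix i assume "i \<in> I"
    then show "(w + a i) / (w + b i) \<noteq> 0"
      using assms by simp
    show "((\<lambda>z. (z + a i) / (z + b i)) has_field_derivative f' i) (at w)"
      unfolding f'_def using \<open>i \<in> I\<close> assms by (intro has_field_derivative_linear_fraction)
  qed
  moreover have "(\<Sum>i\<in>I. f' i / ((w + a i) / (w + b i))) = (\<Sum>i\<in>I. 1 / (w + a i) - 1 / (w + b i))"
    using assms by (intro sum.cong) (auto simp: f'_def)
  ultimately show ?thesis
    by simp
qed

section \<open>Quotients of binomial coefficients\<close>

lemma of_nat_binomial_Suc_left:
  assumes "k \<le> m"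
  shows "(of_nat (Suc m choose k) :: 'a :: field_char_0)
           = of_nat (m choose k) * (of_nat m + 1) / (of_nat m + 1 - of_nat k)"
proof -
  have "(Suc m - k) * (Suc m choose k) = Suc m * (m choose k)"
    using binomial_absorb_comp[of "Suc m" k] by simp
  then have "of_nat (Suc m - k) * of_nat (Suc m choose k) = (of_nat (Suc m) * of_nat (m choose k) :: 'a)"
    by (metis of_nat_mult)
  moreover have "of_nat (Suc m - k) = (of_nat m + 1 - of_nat k :: 'a)"
    using assms by (simp add: of_nat_diff)
  moreover have "of_nat (Suc m - k) \<noteq> (0 :: 'a)"
    using assms by (simp only: of_nat_eq_0_iff)
  ultimately show ?thesis
    by (simp add: eq_divide_eq mult.commute)
qed

lemma of_nat_binomial_Suc_Suc:
  "(of_nat (Suc m choose Suc k) :: 'a :: field_char_0) = of_nat (m choose k) * (of_nat m + 1) / (of_nat k + 1)"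
proof -
  have "of_nat (Suc k) * of_nat (Suc m choose Suc k) = (of_nat (Suc m) * of_nat (m choose k) :: 'a)"
    by (metis Suc_times_binomial of_nat_mult)
  moreover have "of_nat (Suc k) \<noteq> (0 :: 'a)"
    by (rule of_nat_neq_0)
  ultimately show ?thesis
    by (simp add: field_simps del: binomial_Suc_Suc)
qed

text \<open>\<open>binom_ratio w m k = (w+k choose k) / (w+m choose k)\<close> (lemma \<open>gchoose_ratio_eq_binom_ratio\<close>),
  written as a product of linear fractions in \<open>w\<close> so that it can be differentiated factor by factor.\<close>

definition binom_ratio :: "complex \<Rightarrow> nat \<Rightarrow> nat \<Rightarrow> complex" where
  "binom_ratio w m k = (\<Prod>i<k. (w + of_nat (Suc i)) / (w + (of_nat m - of_nat i)))"

lemma binom_ratio_0 [simp]: "binom_ratio w m 0 = 1"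
  by (simp add: binom_ratio_def)

lemma binom_ratio_Suc:
  "binom_ratio w m (Suc k) = binom_ratio w m k * ((w + of_nat (Suc k)) / (w + (of_nat m - of_nat k)))"
  by (simp add: binom_ratio_def)

lemma binom_ratio_Suc_Suc:
  "binom_ratio w (Suc (Suc m)) (Suc k) = (w + 1) / (w + of_nat m + 2) * binom_ratio (w + 1) m k"
  unfolding binom_ratio_def prod.lessThan_Suc_shift by (simp add: algebra_simps)

lemma gchoose_ratio_eq_binom_ratio:
  "(w + of_nat k gchoose k) / (w + of_nat m gchoose k) = binom_ratio w m k"
proof -
  have "(w + of_nat k gchoose k) = (\<Prod>i<k. w + of_nat (Suc i)) / fact k"
    unfolding gbinomial_pochhammer' pochhammer_prod by (simp add: atLeast0LessThan algebra_simps)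
  moreover have "(w + of_nat m gchoose k) = (\<Prod>i<k. w + (of_nat m - of_nat i)) / fact k"
    using gbinomial_mult_fact'[of "w + of_nat m" k]
    by (simp add: atLeast0LessThan algebra_simps eq_divide_eq)
  ultimately show ?thesis
    by (simp add: binom_ratio_def prod_dividef)
qed

lemma pochhammer_double:
  "pochhammer z (2*n) = pochhammer z n * pochhammer (z + of_nat n) n"
  using pochhammer_product'[of z n n] by (simp add: mult_2)

lemma fact_double_Suc_div_fact_Suc:
  "(fact (2 * Suc n) :: 'a :: field_char_0) / fact (Suc n) = fact (2*n) / fact n * (2 * (2 * of_nat n + 1))"
proof -
  have "(fact (2 * Suc n) :: 'a) = fact (2*n) * (2 * (2 * of_nat n + 1)) * (of_nat n + 1)"
    and "(fact (Suc n) :: 'a) = fact n * (of_nat n + 1)"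
    by (simp_all add: algebra_simps)
  moreover have "(of_nat n + 1 :: 'a) \<noteq> 0"
    using of_nat_neq_0[of n, where 'a = 'a] by (simp add: add.commute)
  ultimately show ?thesis
    by (simp only:) (subst mult_divide_mult_cancel_right; simp)
qed

lemma gchoose_eq_pochhammer:
  "(w + of_nat m gchoose m) = pochhammer (w + 1) m / (fact m :: complex)"
  by (simp add: gbinomial_pochhammer')

lemma pochhammer_shift_nonzero_iff:
  "pochhammer (w + 1) m \<noteq> 0 \<longleftrightarrow> (\<forall>j. 1 \<le> j \<longrightarrow> j \<le> m \<longrightarrow> w + of_nat j \<noteq> (0 :: complex))"
proof -
  have "(\<exists>k<m. w + 1 = - of_nat k) \<longleftrightarrow> (\<exists>j. 1 \<le> j \<and> j \<le> m \<and> w + of_nat j = 0)"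
  proof
    assume "\<exists>k<m. w + 1 = - of_nat k"
    then obtain k where "k < m" "w + 1 = - of_nat k"
      by blast
    then show "\<exists>j. 1 \<le> j \<and> j \<le> m \<and> w + of_nat j = 0"
      by (intro exI[of _ "Suc k"]) (simp add: algebra_simps eq_neg_iff_add_eq_0)
  next
    assume "\<exists>j. 1 \<le> j \<and> j \<le> m \<and> w + of_nat j = 0"
    then obtain j where "1 \<le> j" "j \<le> m" "w + of_nat j = 0"
      by blast
    then show "\<exists>k<m. w + 1 = - of_nat k"
      by (intro exI[of _ "j - 1"]) (simp add: of_nat_diff algebra_simps eq_neg_iff_add_eq_0)
  qed
  then show ?thesis
    by (auto simp: pochhammer_eq_0_iff)
qed

lemma binom_ratio_pochhammer:
  assumes nz: "\<And>j. 1 \<le> j \<Longrightarrow> j \<le> m \<Longrightarrow> w + of_nat j \<noteq> 0" and "k \<le> m"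
  shows "binom_ratio w m k * pochhammer (w + 1) m = pochhammer (w + 1) k * pochhammer (w + 1) (m - k)"
  using \<open>k \<le> m\<close>
proof (induction k)
  case (Suc k)
  define d where "d = w + (of_nat m - of_nat k)"
  have "pochhammer (w + 1) (m - k) = d * pochhammer (w + 1) (m - Suc k)"
  proof -
    have "m - k = Suc (m - Suc k)"
      using Suc.prems by simp
    moreover have "w + 1 + of_nat (m - Suc k) = d"
      using Suc.prems by (simp add: d_def of_nat_diff)
    ultimately show ?thesis
      by (simp only: pochhammer_rec')
  qed
  moreover have "d \<noteq> 0"
    using Suc.prems nz[of "m - k"] by (simp add: d_def of_nat_diff)
  moreover have "binom_ratio w m (Suc k) * pochhammer (w + 1) m
      = (binom_ratio w m k * pochhammer (w + 1) m) * ((w + of_nat (Suc k)) / d)"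
    by (simp add: binom_ratio_Suc d_def ac_simps)
  ultimately have "binom_ratio w m (Suc k) * pochhammer (w + 1) m
      = pochhammer (w + 1) k * (w + of_nat (Suc k)) * pochhammer (w + 1) (m - Suc k)"
    using Suc by simp
  also have "\<dots> = pochhammer (w + 1) (Suc k) * pochhammer (w + 1) (m - Suc k)"
    by (simp add: pochhammer_rec' algebra_simps)
  finally show ?case .
qed simp

lemma binom_ratio_reflect:
  assumes "\<And>j. 1 \<le> j \<Longrightarrow> j \<le> m \<Longrightarrow> w + of_nat j \<noteq> 0" and "k \<le> m"
  shows "binom_ratio w m (m - k) = binom_ratio w m k"
proof -
  have "pochhammer (w + 1) m \<noteq> 0"
    using assms(1) pochhammer_shift_nonzero_iff by blast
  moreover have "binom_ratio w m (m - k) * pochhammer (w + 1) m = binom_ratio w m k * pochhammer (w + 1) m"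
    using binom_ratio_pochhammer[OF assms(1), where k = k]
      binom_ratio_pochhammer[OF assms(1), where k = "m - k"] assms(2)
    by (simp add: mult.commute)
  ultimately show ?thesis
    by simp
qed

lemma has_field_derivative_binom_ratio:
  assumes nz: "\<And>j. 1 \<le> j \<Longrightarrow> j \<le> m \<Longrightarrow> x + of_nat j \<noteq> 0" and "k \<le> m"
  shows "((\<lambda>w. binom_ratio w m k) has_field_derivative
           binom_ratio x m k * (genH k x - genH m x + genH (m - k) x)) (at x)"
proof -
  have "x + of_nat (Suc i) \<noteq> 0" "x + (of_nat m - of_nat i) \<noteq> 0" if "i < k" for i
    using that \<open>k \<le> m\<close> nz[of "Suc i"] nz[of "m - i"] by (simp_all add: of_nat_diff)
  then have "((\<lambda>w. binom_ratio w m k) has_field_derivative binom_ratio x m k *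
               (\<Sum>i<k. 1 / (x + of_nat (Suc i)) - 1 / (x + (of_nat m - of_nat i)))) (at x)"
    unfolding binom_ratio_def using \<open>k \<le> m\<close>
    by (intro has_field_derivative_prod_linear_fractions) blast+
  moreover have "(\<Sum>i<k. 1 / (x + of_nat (Suc i)) - 1 / (x + (of_nat m - of_nat i)))
      = genH k x - genH m x + genH (m - k) x"
    by (simp only: sum_subtractf genH_conv_sum_lessThan[symmetric]
        genH_diff_conv_sum[OF \<open>k \<le> m\<close>, symmetric]) simp
  ultimately show ?thesis
    by simp
qed

section \<open>Dixon's identity by the WZ method\<close>

definition dixon_term :: "nat \<Rightarrow> complex \<Rightarrow> complex \<Rightarrow> nat \<Rightarrow> complex" where
  "dixon_term n x y k = (-1)^k * of_nat (2*n choose k) * binom_ratio x (2*n) k * binom_ratio y (2*n) k"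

definition dixon_sum :: "nat \<Rightarrow> complex \<Rightarrow> complex \<Rightarrow> complex" where
  "dixon_sum n x y = (\<Sum>k\<le>2*n. dixon_term n x y k)"

definition dixon_closed_form :: "nat \<Rightarrow> complex \<Rightarrow> complex \<Rightarrow> complex" where
  "dixon_closed_form n x y = fact (2*n) / fact n * pochhammer (x + y + 2 + of_nat n) n
     / (pochhammer (x + 1 + of_nat n) n * pochhammer (y + 1 + of_nat n) n)"

definition dixon_step_factor :: "nat \<Rightarrow> complex \<Rightarrow> complex \<Rightarrow> complex" where
  "dixon_step_factor n x y = 2 * (2 * of_nat n + 1) * (x + y + of_nat n + 3)
     / ((x + 2 * of_nat n + 2) * (y + 2 * of_nat n + 2))"

text \<open>The WZ certificate of the recurrence, as produced by Zeilberger's algorithm.\<close>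

definition dixon_certificate :: "nat \<Rightarrow> complex \<Rightarrow> complex \<Rightarrow> nat \<Rightarrow> complex" where
  "dixon_certificate n x y k = (-1)^k * of_nat (Suc (2*n) choose k)
     * ((x + 2 * of_nat n + 2 - of_nat k) * (y + 2 * of_nat n + 2 - of_nat k)
        / ((x + 2 * of_nat n + 2) * (y + 2 * of_nat n + 2)))
     * binom_ratio (x + 1) (2*n) k * binom_ratio (y + 1) (2*n) k"

lemma dixon_term_Suc_Suc:
  assumes "k \<le> 2*n"
  shows "dixon_term (Suc n) x y (Suc k) = - dixon_term n (x + 1) (y + 1) k
     * ((2 * of_nat n + 1) * (2 * of_nat n + 2) / ((2 * of_nat n + 1 - of_nat k) * (of_nat k + 1)))
     * ((x + 1) * (y + 1) / ((x + 2 * of_nat n + 2) * (y + 2 * of_nat n + 2)))"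
proof -
  have "(of_nat (Suc (Suc (2*n)) choose Suc k) :: complex)
      = of_nat (Suc (2*n) choose k) * (of_nat (2*n) + 2) / (of_nat k + 1)"
    using of_nat_binomial_Suc_Suc[of "Suc (2*n)" k, where 'a = complex]
    by (simp del: binomial_Suc_Suc)
  also have "\<dots> = of_nat (2*n choose k)
      * ((2 * of_nat n + 1) * (2 * of_nat n + 2) / ((2 * of_nat n + 1 - of_nat k) * (of_nat k + 1)))"
    unfolding of_nat_binomial_Suc_left[OF assms] by simp
  finally have binomial: "(of_nat (2 * Suc n choose Suc k) :: complex) = \<dots>"
    by simp
  show ?thesis
    unfolding dixon_term_def binomial
    by (simp add: binom_ratio_Suc_Suc mult_ac del: binomial_Suc_Suc)
qed

lemma dixon_certificate_eq:
  assumes "k \<le> 2*n"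
  shows "dixon_certificate n x y k = dixon_term n (x + 1) (y + 1) k
     * ((2 * of_nat n + 1) / (2 * of_nat n + 1 - of_nat k))
     * ((x + 2 * of_nat n + 2 - of_nat k) * (y + 2 * of_nat n + 2 - of_nat k)
        / ((x + 2 * of_nat n + 2) * (y + 2 * of_nat n + 2)))"
  unfolding dixon_certificate_def dixon_term_def of_nat_binomial_Suc_left[OF assms]
  by (simp add: mult_ac)

lemma dixon_certificate_Suc_eq:
  assumes "k \<le> 2*n"
    and "x + 2 * of_nat n + 1 - of_nat k \<noteq> 0" and "y + 2 * of_nat n + 1 - of_nat k \<noteq> 0"
  shows "dixon_certificate n x y (Suc k) = - dixon_term n (x + 1) (y + 1) k
     * ((2 * of_nat n + 1) / (of_nat k + 1))
     * ((x + of_nat k + 2) * (y + of_nat k + 2) / ((x + 2 * of_nat n + 2) * (y + 2 * of_nat n + 2)))"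
proof -
  define Dx where "Dx = x + 2 * of_nat n + 1 - of_nat k"
  define Dy where "Dy = y + 2 * of_nat n + 1 - of_nat k"
  have "w + 2 * of_nat n + 2 - of_nat (Suc k) = w + 2 * of_nat n + 1 - of_nat k"
    and "w + 1 + (of_nat (2 * n) - of_nat k) = w + 2 * of_nat n + 1 - of_nat k"
    and "w + 1 + of_nat (Suc k) = w + of_nat k + 2" for w :: complex
    by simp_all
  then have "dixon_certificate n x y (Suc k) = - dixon_term n (x + 1) (y + 1) k
      * ((2 * of_nat n + 1) / (of_nat k + 1)) * (Dx * Dy / ((x + 2 * of_nat n + 2) * (y + 2 * of_nat n + 2)))
      * ((x + of_nat k + 2) / Dx) * ((y + of_nat k + 2) / Dy)"
    unfolding dixon_certificate_def dixon_term_def binom_ratio_Suc Dx_def Dy_def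
    by (simp only:) (simp add: of_nat_binomial_Suc_Suc mult_ac del: binomial_Suc_Suc)
  also have "\<dots> = - dixon_term n (x + 1) (y + 1) k * ((2 * of_nat n + 1) / (of_nat k + 1))
      * ((x + of_nat k + 2) * (y + of_nat k + 2) / ((x + 2 * of_nat n + 2) * (y + 2 * of_nat n + 2)))"
    using assms by (simp add: Dx_def Dy_def)
  finally show ?thesis .
qed

text \<open>The WZ relation, once all four terms are written as rational multiples of
  \<open>t = dixon_term n (x + 1) (y + 1) k\<close>.\<close>

lemma dixon_wz_rational_identity:
  fixes x y N K t :: complex
  assumes "2 * N + 1 - K \<noteq> 0" "K + 1 \<noteq> 0" "x + 2 * N + 2 \<noteq> 0" "y + 2 * N + 2 \<noteq> 0"
  shows "- t * ((2 * N + 1) * (2 * N + 2) / ((2 * N + 1 - K) * (K + 1)))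
            * ((x + 1) * (y + 1) / ((x + 2 * N + 2) * (y + 2 * N + 2)))
         - 2 * (2 * N + 1) * (x + y + N + 3) / ((x + 2 * N + 2) * (y + 2 * N + 2)) * t
       = - t * ((2 * N + 1) / (K + 1)) * ((x + K + 2) * (y + K + 2) / ((x + 2 * N + 2) * (y + 2 * N + 2)))
         - t * ((2 * N + 1) / (2 * N + 1 - K))
             * ((x + 2 * N + 2 - K) * (y + 2 * N + 2 - K) / ((x + 2 * N + 2) * (y + 2 * N + 2)))"
proof -
  define M1 where "M1 = 2 * N + 1 - K"
  define M2 where "M2 = K + 1"
  define X where "X = x + 2 * N + 2"
  define Y where "Y = y + 2 * N + 2"
  have "M1 \<noteq> 0" "M2 \<noteq> 0" "X \<noteq> 0" "Y \<noteq> 0"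
    using assms by (simp_all add: M1_def M2_def X_def Y_def)
  then show ?thesis
    unfolding M1_def[symmetric] M2_def[symmetric] X_def[symmetric] Y_def[symmetric]
    by (simp add: field_simps) (simp add: M1_def M2_def X_def Y_def algebra_simps)
qed

lemma dixon_wz_step:
  assumes k: "k \<le> 2*n"
    and "x + 2 * of_nat n + 1 - of_nat k \<noteq> 0" and "y + 2 * of_nat n + 1 - of_nat k \<noteq> 0"
    and "x + 2 * of_nat n + 2 \<noteq> 0" and "y + 2 * of_nat n + 2 \<noteq> 0"
  shows "dixon_term (Suc n) x y (Suc k) - dixon_step_factor n x y * dixon_term n (x + 1) (y + 1) k
       = dixon_certificate n x y (Suc k) - dixon_certificate n x y k"
proof -
  have "(2 * of_nat n + 1 - of_nat k :: complex) = of_nat (Suc (2*n) - k)"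
    using k by (simp add: of_nat_diff)
  then have "(2 * of_nat n + 1 - of_nat k :: complex) \<noteq> 0"
    using k by (simp only: of_nat_eq_0_iff)
  moreover have "(of_nat k + 1 :: complex) \<noteq> 0"
    using of_nat_neq_0[of k, where 'a = complex] by (simp add: add.commute)
  ultimately show ?thesis
    unfolding dixon_term_Suc_Suc[OF k] dixon_certificate_Suc_eq[OF assms(1-3)]
      dixon_certificate_eq[OF k] dixon_step_factor_def
    using assms(4,5) by (rule dixon_wz_rational_identity)
qed

lemma dixon_term_Suc_last:
  "dixon_term (Suc n) x y (Suc (Suc (2*n))) = - dixon_certificate n x y (Suc (2*n))"
proof -
  have "2 * Suc n = Suc (Suc (2*n))"
    by simp
  moreover have "w + 2 * of_nat n + 2 - of_nat (Suc (2*n)) = w + 1" for w :: complex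
    by simp
  ultimately show ?thesis
    unfolding dixon_term_def dixon_certificate_def by (simp add: binom_ratio_Suc_Suc) (simp add: add.commute)
qed

lemma dixon_sum_Suc:
  assumes hx: "\<And>j. 1 \<le> j \<Longrightarrow> j \<le> 2*n + 2 \<Longrightarrow> x + of_nat j \<noteq> 0"
      and hy: "\<And>j. 1 \<le> j \<Longrightarrow> j \<le> 2*n + 2 \<Longrightarrow> y + of_nat j \<noteq> 0"
  shows "dixon_sum (Suc n) x y = dixon_step_factor n x y * dixon_sum n (x + 1) (y + 1)"
proof -
  let ?t = "dixon_term n (x + 1) (y + 1)" and ?g = "dixon_certificate n x y"
  have X: "x + 2 * of_nat n + 2 \<noteq> 0" and Y: "y + 2 * of_nat n + 2 \<noteq> 0"
    using hx[of "2*n + 2"] hy[of "2*n + 2"] by (simp_all add: algebra_simps)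
  have vanish: "?t (Suc (2*n)) = 0" "?g (Suc (Suc (2*n))) = 0"
    by (simp_all add: dixon_term_def dixon_certificate_def del: binomial_Suc_Suc)
  have step: "dixon_term (Suc n) x y (Suc k) = dixon_step_factor n x y * ?t k + (?g (Suc k) - ?g k)"
    if "k < Suc (Suc (2*n))" for k
  proof (cases "k \<le> 2*n")
    case True
    have eq: "w + 2 * of_nat n + 1 - of_nat k = w + of_nat (2*n + 1 - k)" for w :: complex
      using True by (simp add: of_nat_diff)
    have "x + 2 * of_nat n + 1 - of_nat k \<noteq> 0" "y + 2 * of_nat n + 1 - of_nat k \<noteq> 0"
      unfolding eq using True by (intro hx hy; simp)+
    then show ?thesis
      using dixon_wz_step[OF True _ _ X Y] by (simp add: algebra_simps)
  next
    case False
    then have "k = Suc (2*n)"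
      using that by simp
    then show ?thesis
      using vanish by (simp add: dixon_term_Suc_last)
  qed
  have "dixon_sum (Suc n) x y = (\<Sum>k\<le>Suc (Suc (2*n)). dixon_term (Suc n) x y k)"
    by (simp add: dixon_sum_def)
  also have "\<dots> = dixon_term (Suc n) x y 0 + (\<Sum>k<Suc (Suc (2*n)). dixon_term (Suc n) x y (Suc k))"
    by (simp only: sum.atMost_Suc_shift lessThan_Suc_atMost)
  also have "(\<Sum>k<Suc (Suc (2*n)). dixon_term (Suc n) x y (Suc k))
      = (\<Sum>k<Suc (Suc (2*n)). dixon_step_factor n x y * ?t k + (?g (Suc k) - ?g k))"
    using step by (rule sum.cong[OF refl]) simp
  also have "\<dots> = dixon_step_factor n x y * (\<Sum>k<Suc (Suc (2*n)). ?t k) + (?g (Suc (Suc (2*n))) - ?g 0)"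
    by (simp only: sum.distrib sum_distrib_left sum_lessThan_telescope)
  also have "(\<Sum>k<Suc (Suc (2*n)). ?t k) = dixon_sum n (x + 1) (y + 1)"
    using vanish by (simp add: dixon_sum_def lessThan_Suc_atMost)
  finally show ?thesis
    using vanish X Y by (simp add: dixon_term_def dixon_certificate_def)
qed

lemma dixon_closed_form_Suc:
  assumes hx: "\<And>j. 1 \<le> j \<Longrightarrow> j \<le> 2*n + 2 \<Longrightarrow> x + of_nat j \<noteq> 0"
      and hy: "\<And>j. 1 \<le> j \<Longrightarrow> j \<le> 2*n + 2 \<Longrightarrow> y + of_nat j \<noteq> 0"
  shows "dixon_closed_form (Suc n) x y = dixon_step_factor n x y * dixon_closed_form n (x + 1) (y + 1)"
proof -
  have X: "x + 2 * of_nat n + 2 \<noteq> 0" and Y: "y + 2 * of_nat n + 2 \<noteq> 0"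
    using hx[of "2*n + 2"] hy[of "2*n + 2"] by (simp_all add: algebra_simps)
  have "pochhammer (w + 1 + 1 + of_nat n) n \<noteq> 0"
    if "\<And>j. 1 \<le> j \<Longrightarrow> j \<le> 2*n + 2 \<Longrightarrow> w + of_nat j \<noteq> 0" for w :: complex
  proof -
    have "pochhammer (w + 1 + 1) (2*n) \<noteq> 0"
      unfolding pochhammer_shift_nonzero_iff using that[of "Suc _"] by (simp add: add.assoc)
    then show ?thesis
      by (simp add: pochhammer_double)
  qed
  then have px: "pochhammer (x + 1 + 1 + of_nat n) n \<noteq> 0" and py: "pochhammer (y + 1 + 1 + of_nat n) n \<noteq> 0"
    using hx hy by blast+
  have num: "pochhammer (x + y + 2 + of_nat (Suc n)) (Suc n)
      = (x + y + of_nat n + 3) * pochhammer (x + 1 + (y + 1) + 2 + of_nat n) n"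
    by (simp add: pochhammer_rec algebra_simps)
  have den: "pochhammer (w + 1 + of_nat (Suc n)) (Suc n)
      = pochhammer (w + 1 + 1 + of_nat n) n * (w + 2 * of_nat n + 2)" for w :: complex
    by (simp add: pochhammer_rec' algebra_simps)
  show ?thesis
    using X Y px py unfolding dixon_closed_form_def dixon_step_factor_def num den fact_double_Suc_div_fact_Suc
    by (simp add: field_simps)
qed

theorem dixon_identity:
  assumes "\<And>j. 1 \<le> j \<Longrightarrow> j \<le> 2*n \<Longrightarrow> x + of_nat j \<noteq> 0"
      and "\<And>j. 1 \<le> j \<Longrightarrow> j \<le> 2*n \<Longrightarrow> y + of_nat j \<noteq> 0"
  shows "dixon_sum n x y = dixon_closed_form n x y"
  using assms
proof (induction n arbitrary: x y)
  case 0
  then show ?case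
    by (simp add: dixon_sum_def dixon_term_def dixon_closed_form_def)
next
  case (Suc n)
  have "x + 1 + of_nat j \<noteq> 0" "y + 1 + of_nat j \<noteq> 0" if "1 \<le> j" "j \<le> 2*n" for j
    using that Suc.prems[of "Suc j"] by (simp_all add: add.assoc)
  then have "dixon_sum n (x + 1) (y + 1) = dixon_closed_form n (x + 1) (y + 1)"
    by (intro Suc.IH)
  then show ?case
    using Suc.prems by (simp add: dixon_sum_Suc dixon_closed_form_Suc)
qed

section \<open>Differentiating Dixon's identity\<close>

lemma has_field_derivative_dixon_sum:
  assumes hx: "\<And>j. 1 \<le> j \<Longrightarrow> j \<le> 2*n \<Longrightarrow> x + of_nat j \<noteq> 0"
  shows "((\<lambda>w. dixon_sum n w y) has_field_derivative
           (\<Sum>k\<le>2*n. dixon_term n x y k * (genH k x - genH (2*n) x + genH (2*n - k) x))) (at x)"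
  unfolding dixon_sum_def
proof (rule DERIV_sum)
  fix k assume "k \<in> {..2*n}"
  then have "((\<lambda>w. (-1)^k * of_nat (2*n choose k) * binom_ratio y (2*n) k * binom_ratio w (2*n) k)
      has_field_derivative (-1)^k * of_nat (2*n choose k) * binom_ratio y (2*n) k
        * (binom_ratio x (2*n) k * (genH k x - genH (2*n) x + genH (2*n - k) x))) (at x)"
    using hx by (intro DERIV_cmult has_field_derivative_binom_ratio) auto
  then show "((\<lambda>w. dixon_term n w y k) has_field_derivative
      dixon_term n x y k * (genH k x - genH (2*n) x + genH (2*n - k) x)) (at x)"
    by (simp add: dixon_term_def mult_ac)
qed

lemma has_field_derivative_dixon_closed_form:
  assumes hx: "\<And>j. 1 \<le> j \<Longrightarrow> j \<le> 2*n \<Longrightarrow> x + of_nat j \<noteq> 0"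
      and hxy: "\<And>j. 1 \<le> j \<Longrightarrow> j \<le> 2*n \<Longrightarrow> 1 + x + y + of_nat j \<noteq> 0"
  shows "((\<lambda>w. dixon_closed_form n w y) has_field_derivative dixon_closed_form n x y
           * ((genH (2*n) (1 + x + y) - genH n (1 + x + y)) - (genH (2*n) x - genH n x))) (at x)"
proof -
  define c where "c = fact (2*n) / fact n / pochhammer (y + 1 + of_nat n) n"
  define a where "a i = y + 2 + of_nat n + of_nat i" for i :: nat
  define b :: "nat \<Rightarrow> complex" where "b i = 1 + of_nat n + of_nat i" for i
  have closed_form: "dixon_closed_form n w y = c * (\<Prod>i<n. (w + a i) / (w + b i))" for w
    unfolding dixon_closed_form_def c_def a_def b_def pochhammer_prod prod_dividef atLeast0LessThan
    by (simp add: algebra_simps)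
  have "x + a i \<noteq> 0" "x + b i \<noteq> 0" if "i < n" for i
    using that hxy[of "n + Suc i"] hx[of "n + Suc i"] by (simp_all add: a_def b_def algebra_simps)
  then have "((\<lambda>w. c * (\<Prod>i<n. (w + a i) / (w + b i))) has_field_derivative
      c * ((\<Prod>i<n. (x + a i) / (x + b i)) * (\<Sum>i<n. 1 / (x + a i) - 1 / (x + b i)))) (at x)"
    by (intro DERIV_cmult has_field_derivative_prod_linear_fractions) auto
  moreover have "(\<Sum>i<n. 1 / (x + a i) - 1 / (x + b i))
      = (genH (2*n) (1 + x + y) - genH n (1 + x + y)) - (genH (2*n) x - genH n x)"
    using genH_add[of n n "1 + x + y", folded mult_2] genH_add[of n n x, folded mult_2]
    by (simp add: sum_subtractf a_def b_def algebra_simps)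
  ultimately show ?thesis
    unfolding closed_form by (simp add: mult.assoc)
qed

lemma dixon_term_reflect:
  assumes "\<And>j. 1 \<le> j \<Longrightarrow> j \<le> 2*n \<Longrightarrow> x + of_nat j \<noteq> 0"
      and "\<And>j. 1 \<le> j \<Longrightarrow> j \<le> 2*n \<Longrightarrow> y + of_nat j \<noteq> 0"
      and "k \<le> 2*n"
  shows "dixon_term n x y (2*n - k) = dixon_term n x y k"
proof -
  have "even (2*n - k) \<longleftrightarrow> even k"
    using \<open>k \<le> 2*n\<close> by presburger
  then have "(-1 :: complex)^(2*n - k) = (-1)^k"
    by (simp add: minus_one_power_iff)
  then show ?thesis
    using assms by (simp add: dixon_term_def binom_ratio_reflect binomial_symmetric[symmetric])
qed

lemma sum_dixon_term_genH_reflect: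
  assumes "\<And>j. 1 \<le> j \<Longrightarrow> j \<le> 2*n \<Longrightarrow> x + of_nat j \<noteq> 0"
      and "\<And>j. 1 \<le> j \<Longrightarrow> j \<le> 2*n \<Longrightarrow> y + of_nat j \<noteq> 0"
  shows "(\<Sum>k\<le>2*n. dixon_term n x y k * genH (2*n - k) x) = (\<Sum>k\<le>2*n. dixon_term n x y k * genH k x)"
proof -
  have "(\<Sum>k\<le>2*n. dixon_term n x y k * genH (2*n - k) x)
      = (\<Sum>k\<le>2*n. dixon_term n x y (2*n - k) * genH (2*n - (2*n - k)) x)"
    using sum.atLeastAtMost_rev[of "\<lambda>k. dixon_term n x y k * genH (2*n - k) x" 0 "2*n"]
    by (simp add: atLeast0AtMost)
  also have "\<dots> = (\<Sum>k\<le>2*n. dixon_term n x y k * genH k x)"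
    using assms by (intro sum.cong) (auto simp: dixon_term_reflect)
  finally show ?thesis .
qed

lemma dixon_closed_form_logderiv_eq:
  assumes hx: "\<And>j. 1 \<le> j \<Longrightarrow> j \<le> 2*n \<Longrightarrow> x + of_nat j \<noteq> 0"
      and hy: "\<And>j. 1 \<le> j \<Longrightarrow> j \<le> 2*n \<Longrightarrow> y + of_nat j \<noteq> 0"
      and hxy: "\<And>j. 1 \<le> j \<Longrightarrow> j \<le> 2*n \<Longrightarrow> 1 + x + y + of_nat j \<noteq> 0"
  shows "dixon_closed_form n x y * ((genH (2*n) (1 + x + y) - genH n (1 + x + y)) - (genH (2*n) x - genH n x))
       = (\<Sum>k\<le>2*n. dixon_term n x y k * (genH k x - genH (2*n) x + genH (2*n - k) x))"
proof -
  define U where "U = - (\<lambda>j. - of_nat j :: complex) ` {1..2*n}"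
  have "open U"
    unfolding U_def by (intro open_Compl finite_imp_closed) auto
  have U_iff: "w \<in> U \<longleftrightarrow> (\<forall>j. 1 \<le> j \<longrightarrow> j \<le> 2*n \<longrightarrow> w + of_nat j \<noteq> 0)" for w
    unfolding U_def by (auto simp: eq_neg_iff_add_eq_0 image_iff)
  have "x \<in> U"
    using hx by (simp add: U_iff)
  have dixon_on_U: "dixon_sum n w y = dixon_closed_form n w y" if "w \<in> U" for w
    using that hy by (intro dixon_identity) (simp_all add: U_iff)
  have "((\<lambda>w. dixon_sum n w y) has_field_derivative
      (\<Sum>k\<le>2*n. dixon_term n x y k * (genH k x - genH (2*n) x + genH (2*n - k) x))) (at x)"
    using has_field_derivative_dixon_sum[of n x y] hx by blast
  then have "((\<lambda>w. dixon_closed_form n w y) has_field_derivative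
      (\<Sum>k\<le>2*n. dixon_term n x y k * (genH k x - genH (2*n) x + genH (2*n - k) x))) (at x)"
    using \<open>open U\<close> \<open>x \<in> U\<close> dixon_on_U by (rule has_field_derivative_transform_within_open)
  then show ?thesis
    using has_field_derivative_dixon_closed_form[OF hx hxy] by (rule DERIV_unique[rotated])
qed

lemma dixon_sum_weighted_genH:
  assumes hx: "\<And>j. 1 \<le> j \<Longrightarrow> j \<le> 2*n \<Longrightarrow> x + of_nat j \<noteq> 0"
      and hy: "\<And>j. 1 \<le> j \<Longrightarrow> j \<le> 2*n \<Longrightarrow> y + of_nat j \<noteq> 0"
      and hxy: "\<And>j. 1 \<le> j \<Longrightarrow> j \<le> 2*n \<Longrightarrow> 1 + x + y + of_nat j \<noteq> 0"
  shows "(\<Sum>k\<le>2*n. dixon_term n x y k * genH k x)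
       = 1/2 * dixon_closed_form n x y * (genH n x - genH n (1 + x + y) + genH (2*n) (1 + x + y))"
proof -
  define T where "T = (\<Sum>k\<le>2*n. dixon_term n x y k * genH k x)"
  have "dixon_closed_form n x y * ((genH (2*n) (1 + x + y) - genH n (1 + x + y)) - (genH (2*n) x - genH n x))
      = (\<Sum>k\<le>2*n. dixon_term n x y k * (genH k x - genH (2*n) x + genH (2*n - k) x))"
    using hx hy hxy by (rule dixon_closed_form_logderiv_eq)
  also have "\<dots> = T - genH (2*n) x * dixon_sum n x y + (\<Sum>k\<le>2*n. dixon_term n x y k * genH (2*n - k) x)"
    by (simp add: T_def dixon_sum_def algebra_simps sum.distrib sum_subtractf sum_distrib_left)
  also have "\<dots> = 2 * T - genH (2*n) x * dixon_closed_form n x y"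
    using hx hy by (simp add: sum_dixon_term_genH_reflect dixon_identity T_def)
  finally show ?thesis
    unfolding T_def[symmetric] by (simp add: field_simps)
qed

lemma dixon_closed_form_eq_gchoose_quotient:
  assumes hx: "\<And>j. 1 \<le> j \<Longrightarrow> j \<le> 2*n \<Longrightarrow> x + of_nat j \<noteq> 0"
      and hy: "\<And>j. 1 \<le> j \<Longrightarrow> j \<le> 2*n \<Longrightarrow> y + of_nat j \<noteq> 0"
      and hxy: "\<And>j. 1 \<le> j \<Longrightarrow> j \<le> 2*n \<Longrightarrow> 1 + x + y + of_nat j \<noteq> 0"
  shows "dixon_closed_form n x y
       = ((x + of_nat n) gchoose n) * ((y + of_nat n) gchoose n) * ((1 + x + y + of_nat (2*n)) gchoose (2*n))
         / (((x + of_nat (2*n)) gchoose (2*n)) * ((y + of_nat (2*n)) gchoose (2*n))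
            * ((1 + x + y + of_nat n) gchoose n))"
proof -
  have "pochhammer (x + 1) (2*n) \<noteq> 0" "pochhammer (y + 1) (2*n) \<noteq> 0" "pochhammer (1 + x + y + 1) n \<noteq> 0"
    unfolding pochhammer_shift_nonzero_iff using hx hy hxy by auto
  then show ?thesis
    unfolding gchoose_eq_pochhammer pochhammer_double dixon_closed_form_def
    by (simp add: field_simps)
qed

theorem theorem1:
  fixes n :: nat and x y :: complex
  assumes hx: "\<And>k. k \<le> 2*n \<Longrightarrow> ((x + of_nat (2*n)) gchoose k) \<noteq> 0"
      and hy: "\<And>k. k \<le> 2*n \<Longrightarrow> ((y + of_nat (2*n)) gchoose k) \<noteq> 0"
      and hxy: "((1 + x + y + of_nat n) gchoose n) \<noteq> 0"
      and hHx: "\<And>j. 1 \<le> j \<Longrightarrow> j \<le> 2*n \<Longrightarrow> x + of_nat j \<noteq> 0"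
      and hHxy: "\<And>j. 1 \<le> j \<Longrightarrow> j \<le> 2*n \<Longrightarrow> 1 + x + y + of_nat j \<noteq> 0"
  shows "(\<Sum>k=0..2*n. (-1)^k * of_nat ((2*n) choose k)
            * (((x + of_nat k) gchoose k) * ((y + of_nat k) gchoose k))
            / (((x + of_nat (2*n)) gchoose k) * ((y + of_nat (2*n)) gchoose k))
            * genH k x)
       = 1/2 * (((x + of_nat n) gchoose n) * ((y + of_nat n) gchoose n)
                 * ((1 + x + y + of_nat (2*n)) gchoose (2*n)))
             / (((x + of_nat (2*n)) gchoose (2*n)) * ((y + of_nat (2*n)) gchoose (2*n))
                 * ((1 + x + y + of_nat n) gchoose n))
             * (genH n x - genH n (1 + x + y) + genH (2*n) (1 + x + y))"
proof -
  have "pochhammer (y + 1) (2*n) \<noteq> 0"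
    using hy[of "2*n"] unfolding gchoose_eq_pochhammer by simp
  then have hHy: "\<And>j. 1 \<le> j \<Longrightarrow> j \<le> 2*n \<Longrightarrow> y + of_nat j \<noteq> 0"
    unfolding pochhammer_shift_nonzero_iff by blast
  have "(-1)^k * of_nat ((2*n) choose k) * (((x + of_nat k) gchoose k) * ((y + of_nat k) gchoose k))
          / (((x + of_nat (2*n)) gchoose k) * ((y + of_nat (2*n)) gchoose k))
        = dixon_term n x y k" for k
    by (simp add: dixon_term_def gchoose_ratio_eq_binom_ratio[symmetric])
  then show ?thesis
    using dixon_sum_weighted_genH[OF hHx hHy hHxy] dixon_closed_form_eq_gchoose_quotient[OF hHx hHy hHxy]
    by (simp add: atLeast0AtMost)
qed

end
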